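(* Let $n\ge 1$, $\mathbf{C} = (C_1,\dots,C_n)\in[0,1]^n$ and $\mathbf{V} = (V_1,\dots,V_n)\in[0,1]^n$. Define $$r^{\mathbf{L}}(\mathbf{C},\mathbf{V}) = \frac{1}{n}\sum_{j=1}^n (C_j - V_j), \qquad r^{\mathbf{V}}(\mathbf{C},\mathbf{V}) = \frac{1}{n}\sqrt{\Big(\sum_{j=1}^n C_j\cos V_j\Big)^2 + \Big(\sum_{j=1}^n C_j \sin V_j\Big)^2}.$$ For $i\in\{1,\dots,n\}$ and $\Delta c>0$, let $\Delta r^{\mathbf{L}}(C_i) = r^{\mathbf{L}}(\mathbf{C}+\Delta c\,\mathbf{e}_i,\mathbf{V}) - r^{\mathbf{L}}(\mathbf{C},\mathbf{V})$ and $\Delta r^{\mathbf{V}}(C_i) = r^{\mathbf{V}}(\mathbf{C}+\Delta c\,\mathbf{e}_i,\mathbf{V}) - r^{\mathbf{V}}(\mathbf{C},\mathbf{V})$, where $\mathbf{e}_i$ is the $i$-th standard basis vector. Then $\Delta r^{\mathbf{V}}(C_i) > 0$ and $\Delta r^{\mathbf{V}}(C_i) \le \Delta r^{\mathbf{L}}(C_i) = \frac{\Delta c}{n}$.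
   Context: Here $C_j$ and $V_j$ are the consistency and volatility of the $j$-th reasoning trajectory in a group of $n$ trajectories sharing the same final answer; $r^{\mathbf{L}}$ is the linear intrinsic reward and $r^{\mathbf{V}}$ the vectorial intrinsic reward (magnitude of the averaged vectors $C_j(\cos V_j, \sin V_j)$). *)

theory Defs
  imports Complex_Main
begin

text \<open>Vectors in [0,1]^n are represented as functions nat => real, indexed by 1..n.\<close>

definition rL :: "nat \<Rightarrow> (nat \<Rightarrow> real) \<Rightarrow> (nat \<Rightarrow> real) \<Rightarrow> real" where
  "rL n C V = (1 / real n) * (\<Sum>j=1..n. C j - V j)"

definition rV :: "nat \<Rightarrow> (nat \<Rightarrow> real) \<Rightarrow> (nat \<Rightarrow> real) \<Rightarrow> real" where
  "rV n C V = (1 / real n) *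
     sqrt ((\<Sum>j=1..n. C j * cos (V j))^2 + (\<Sum>j=1..n. C j * sin (V j))^2)"

definition bump :: "(nat \<Rightarrow> real) \<Rightarrow> nat \<Rightarrow> real \<Rightarrow> nat \<Rightarrow> real" where
  "bump C i dc = C(i := C i + dc)"

end

theory Submission
  imports Defs "HOL-Analysis.Inner_Product"
begin

text \<open>\<open>n r\<^sup>V\<close> is the length of the resultant \<open>\<Sum> C\<^sub>j cis V\<^sub>j\<close> in the complex plane.
  Raising \<open>C\<^sub>i\<close> by \<open>\<Delta>c\<close> adds the vector \<open>\<Delta>c cis V\<^sub>i\<close> to the resultant.
  All angles lie in \<open>[0,1]\<close>, so any two differ by less than \<open>\<pi>/2\<close>; hence the added vector
  makes a nonnegative inner product with the old resultant, which forces the length to grow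
  strictly. The triangle inequality bounds the growth by \<open>\<Delta>c\<close>, the growth of \<open>n r\<^sup>L\<close>.\<close>

lemma norm_less_norm_add_scaleR:
  fixes x u :: "'a::real_inner"
  assumes "0 \<le> inner x u" and "u \<noteq> 0" and "0 < t"
  shows "norm x < norm (x + t *\<^sub>R u)"
proof -
  have "(norm (x + t *\<^sub>R u))\<^sup>2 = (norm x)\<^sup>2 + 2 * t * inner x u + t\<^sup>2 * (norm u)\<^sup>2"
    unfolding power2_norm_eq_inner by (simp add: inner_add inner_commute algebra_simps power2_eq_square)
  also have "\<dots> > (norm x)\<^sup>2"
    using assms by (simp add: add_nonneg_pos)
  finally show ?thesis
    by (simp add: power2_less_imp_less)
qed

lemma sum_bump_scaleR:
  fixes f :: "nat \<Rightarrow> 'a::real_vector"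
  assumes "finite A" and "i \<in> A"
  shows "(\<Sum>j\<in>A. bump C i dc j *\<^sub>R f j) = (\<Sum>j\<in>A. C j *\<^sub>R f j) + dc *\<^sub>R f i"
proof -
  have "(\<Sum>j\<in>A. bump C i dc j *\<^sub>R f j) = (\<Sum>j\<in>A. C j *\<^sub>R f j + (if j = i then dc *\<^sub>R f i else 0))"
    by (rule sum.cong) (auto simp: bump_def scaleR_add_left)
  then show ?thesis
    using assms by (simp add: sum.distrib)
qed

definition resultant :: "nat \<Rightarrow> (nat \<Rightarrow> real) \<Rightarrow> (nat \<Rightarrow> real) \<Rightarrow> complex" where
  "resultant n C V = (\<Sum>j=1..n. C j *\<^sub>R cis (V j))"

lemma rV_eq_norm_resultant: "rV n C V = norm (resultant n C V) / real n"
  by (simp add: rV_def resultant_def norm_complex_def)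

lemma resultant_bump:
  assumes "i \<in> {1..n}"
  shows "resultant n (bump C i dc) V = resultant n C V + dc *\<^sub>R cis (V i)"
  using assms by (simp add: resultant_def sum_bump_scaleR)

lemma rL_bump:
  assumes "i \<in> {1..n}"
  shows "rL n (bump C i dc) V = rL n C V + dc / real n"
proof -
  have "(\<Sum>j=1..n. bump C i dc j) = (\<Sum>j=1..n. C j) + dc"
    using sum_bump_scaleR[of "{1..n}" i C dc "\<lambda>_. 1 :: real"] assms by simp
  then show ?thesis
    by (simp add: rL_def sum_subtractf) (simp add: diff_divide_distrib add_divide_distrib)
qed

lemma inner_cis_cis: "inner (cis a) (cis b) = cos (a - b)"
  by (simp add: inner_complex_def cos_diff)

lemma inner_resultant_cis_nonneg:
  assumes "\<forall>j\<in>{1..n}. 0 \<le> C j" and "\<forall>j\<in>{1..n}. \<bar>V j - a\<bar> \<le> pi / 2"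
  shows "0 \<le> inner (resultant n C V) (cis a)"
  unfolding resultant_def inner_sum_left inner_scaleR_left inner_cis_cis
proof (intro sum_nonneg mult_nonneg_nonneg cos_ge_zero)
  fix j assume "j \<in> {1..n}"
  then have "0 \<le> C j" and "\<bar>V j - a\<bar> \<le> pi / 2"
    using assms by blast+
  then show "0 \<le> C j" and "- (pi / 2) \<le> V j - a" and "V j - a \<le> pi / 2"
    by linarith+
qed

lemma abs_diff_le_pi_half:
  fixes a b :: real
  assumes "0 \<le> a" "a \<le> 1" "0 \<le> b" "b \<le> 1"
  shows "\<bar>a - b\<bar> \<le> pi / 2"
  using assms pi_ge_two by linarith

theorem mainTheorem6:
  fixes n :: nat and C V :: "nat \<Rightarrow> real" and i :: nat and dc :: real
  assumes "n \<ge> 1"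
    and "\<forall>j\<in>{1..n}. 0 \<le> C j \<and> C j \<le> 1"
    and "\<forall>j\<in>{1..n}. 0 \<le> V j \<and> V j \<le> 1"
    and "i \<in> {1..n}"
    and "dc > 0"
  shows "rV n (bump C i dc) V - rV n C V > 0
    \<and> rV n (bump C i dc) V - rV n C V \<le> rL n (bump C i dc) V - rL n C V
    \<and> rL n (bump C i dc) V - rL n C V = dc / real n"
proof -
  define R where "R = resultant n C V"
  have "\<bar>V j - V i\<bar> \<le> pi / 2" if "j \<in> {1..n}" for j
    using assms(3,4) that by (intro abs_diff_le_pi_half) auto
  then have "0 \<le> inner R (cis (V i))"
    unfolding R_def using assms(2) by (intro inner_resultant_cis_nonneg) blast+
  then have "norm R < norm (R + dc *\<^sub>R cis (V i))"
    using assms(5) by (intro norm_less_norm_add_scaleR) auto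
  moreover have "norm (R + dc *\<^sub>R cis (V i)) \<le> norm R + dc"
    using norm_triangle_ineq[of R "dc *\<^sub>R cis (V i)"] assms(5) by simp
  moreover have "rV n (bump C i dc) V - rV n C V = (norm (R + dc *\<^sub>R cis (V i)) - norm R) / real n"
    unfolding R_def rV_eq_norm_resultant resultant_bump[OF assms(4)] by (simp add: diff_divide_distrib)
  moreover have "real n > 0"
    using assms(1) by simp
  ultimately show ?thesis
    using rL_bump[OF assms(4)] by (simp add: divide_right_mono)
qed

end
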